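(* With $H(\alpha):=H(\theta(\alpha))$ and $R(\alpha):=\sum_{i=1}^N\overline\theta_i(\alpha)\frac{\beta_i^2}{2}$: (1) $H(1)=-\sum_{i,j}\pi_iP_{ij}\log P_{ij}$ and $R(1)=\sum_{i=1}^N\pi_i\frac{\beta_i^2}{2}$; (2) $H(0)=\log\rho_0$; (3) the function $\alpha\mapsto H(\alpha)-\alpha^2R(\alpha)$ is non-increasing on $[0,1]$.
   Context: $V=\{1,\dots,N\}$; $P$ row-stochastic irreducible aperiodic with stationary distribution $\pi>0$; $\beta\in\mathbb R^N$; $\rho_0$ is the spectral radius of the 0-1 matrix $P_0$ with $(P_0)_{ij}=1$ iff $P_{ij}>0$. For $\alpha\in\mathbb R$ define $M(\alpha)\in\mathbb R^{N\times N}$ by $[M(\alpha)]_{ij}=P_{ij}^\alpha e^{-\alpha(1-\alpha)\beta_i^2/2}$ if $P_{ij}>0$ and $[M(\alpha)]_{ij}=0$ if $P_{ij}=0$ (so $M(0)=P_0$). Let $\lambda(\alpha)$ be the Perron root (spectral radius) of $M(\alpha)$ and $v(\alpha)>0$ a right Perron eigenvector. Let $Q(\alpha)_{ij}=\frac{[M(\alpha)]_{ij}v_j(\alpha)}{\lambda(\alpha)v_i(\alpha)}$ (a stochastic, irreducible, aperiodic matrix), $\overline\theta(\alpha)$ its stationary distribution, and $\theta(\alpha)_{ij}=\overline\theta_i(\alpha)Q(\alpha)_{ij}$. $H(\theta)=-\sum_{i,j}\theta_{ij}\log(\theta_{ij}/\overline\theta_i)$ with $\overline\theta=\theta\mathbf1$,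 $0\log0=0$. *)

theory Defs
  imports Complex_Main
begin

text \<open>Matrices indexed by a finite type 'n (so V = UNIV :: 'n set, N = CARD('n)),
  represented as functions 'n \<Rightarrow> 'n \<Rightarrow> real.\<close>

definition stochastic_mat :: "('n::finite \<Rightarrow> 'n \<Rightarrow> real) \<Rightarrow> bool" where
  "stochastic_mat P \<longleftrightarrow> (\<forall>i j. P i j \<ge> 0) \<and> (\<forall>i. (\<Sum>j\<in>UNIV. P i j) = 1)"

definition edges_of :: "('n \<Rightarrow> 'n \<Rightarrow> real) \<Rightarrow> ('n \<times> 'n) set" where
  "edges_of P = {(i, j). P i j > 0}"

definition irreducible_mat :: "('n::finite \<Rightarrow> 'n \<Rightarrow> real) \<Rightarrow> bool" where
  "irreducible_mat P \<longleftrightarrow> (\<forall>i j. (i, j) \<in> (edges_of P)\<^sup>+)"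

definition aperiodic_mat :: "('n::finite \<Rightarrow> 'n \<Rightarrow> real) \<Rightarrow> bool" where
  "aperiodic_mat P \<longleftrightarrow> (\<forall>i. Gcd {k::nat. 0 < k \<and> (i, i) \<in> (edges_of P) ^^ k} = 1)"

definition stationary_dist :: "('n::finite \<Rightarrow> 'n \<Rightarrow> real) \<Rightarrow> ('n \<Rightarrow> real) \<Rightarrow> bool" where
  "stationary_dist P p \<longleftrightarrow> (\<forall>i. p i \<ge> 0) \<and> (\<Sum>i\<in>UNIV. p i) = 1 \<and>
     (\<forall>j. (\<Sum>i\<in>UNIV. p i * P i j) = p j)"

definition spec_rad :: "('n::finite \<Rightarrow> 'n \<Rightarrow> real) \<Rightarrow> real" where
  "spec_rad A = Sup {cmod \<mu> | \<mu>. \<exists>x :: 'n \<Rightarrow> complex. x \<noteq> (\<lambda>_. 0) \<and>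
       (\<forall>i. (\<Sum>j\<in>UNIV. complex_of_real (A i j) * x j) = \<mu> * x i)}"

definition zero_one_mat :: "('n::finite \<Rightarrow> 'n \<Rightarrow> real) \<Rightarrow> 'n \<Rightarrow> 'n \<Rightarrow> real" where
  "zero_one_mat P i j = (if P i j > 0 then 1 else 0)"

definition Mmat :: "('n::finite \<Rightarrow> 'n \<Rightarrow> real) \<Rightarrow> ('n \<Rightarrow> real) \<Rightarrow> real \<Rightarrow> 'n \<Rightarrow> 'n \<Rightarrow> real" where
  "Mmat P \<beta> \<alpha> i j = (if P i j > 0 then P i j powr \<alpha> * exp (- \<alpha> * (1 - \<alpha>) * (\<beta> i)\<^sup>2 / 2) else 0)"

definition perron_root :: "('n::finite \<Rightarrow> 'n \<Rightarrow> real) \<Rightarrow> ('n \<Rightarrow> real) \<Rightarrow> real \<Rightarrow> real" where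
  "perron_root P \<beta> \<alpha> = spec_rad (Mmat P \<beta> \<alpha>)"

definition perron_vec :: "('n::finite \<Rightarrow> 'n \<Rightarrow> real) \<Rightarrow> ('n \<Rightarrow> real) \<Rightarrow> real \<Rightarrow> 'n \<Rightarrow> real" where
  "perron_vec P \<beta> \<alpha> = (SOME v. (\<forall>i. v i > 0) \<and>
      (\<forall>i. (\<Sum>j\<in>UNIV. Mmat P \<beta> \<alpha> i j * v j) = perron_root P \<beta> \<alpha> * v i))"

definition Qmat :: "('n::finite \<Rightarrow> 'n \<Rightarrow> real) \<Rightarrow> ('n \<Rightarrow> real) \<Rightarrow> real \<Rightarrow> 'n \<Rightarrow> 'n \<Rightarrow> real" where
  "Qmat P \<beta> \<alpha> i j = Mmat P \<beta> \<alpha> i j * perron_vec P \<beta> \<alpha> j /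
      (perron_root P \<beta> \<alpha> * perron_vec P \<beta> \<alpha> i)"

definition thetabar :: "('n::finite \<Rightarrow> 'n \<Rightarrow> real) \<Rightarrow> ('n \<Rightarrow> real) \<Rightarrow> real \<Rightarrow> 'n \<Rightarrow> real" where
  "thetabar P \<beta> \<alpha> = (SOME p. stationary_dist (Qmat P \<beta> \<alpha>) p)"

definition theta :: "('n::finite \<Rightarrow> 'n \<Rightarrow> real) \<Rightarrow> ('n \<Rightarrow> real) \<Rightarrow> real \<Rightarrow> 'n \<Rightarrow> 'n \<Rightarrow> real" where
  "theta P \<beta> \<alpha> i j = thetabar P \<beta> \<alpha> i * Qmat P \<beta> \<alpha> i j"

definition entropy :: "('n::finite \<Rightarrow> 'n \<Rightarrow> real) \<Rightarrow> real" where
  "entropy th = - (\<Sum>i\<in>UNIV. \<Sum>j\<in>UNIV.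
      (if th i j = 0 then 0 else th i j * ln (th i j / (\<Sum>k\<in>UNIV. th i k))))"

definition Hfun :: "('n::finite \<Rightarrow> 'n \<Rightarrow> real) \<Rightarrow> ('n \<Rightarrow> real) \<Rightarrow> real \<Rightarrow> real" where
  "Hfun P \<beta> \<alpha> = entropy (theta P \<beta> \<alpha>)"

definition Rfun :: "('n::finite \<Rightarrow> 'n \<Rightarrow> real) \<Rightarrow> ('n \<Rightarrow> real) \<Rightarrow> real \<Rightarrow> real" where
  "Rfun P \<beta> \<alpha> = (\<Sum>i\<in>UNIV. thetabar P \<beta> \<alpha> i * (\<beta> i)\<^sup>2 / 2)"

end

theory Submission
  imports Defs "HOL-Analysis.Analysis"
begin

text \<open>For a stationary Markov measure \<open>\<theta> = p Q\<close> supported on the edges of a nonnegative matrix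
  \<open>M\<close> with Perron eigenpair \<open>(\<lambda>, v)\<close>, one has \<open>H(\<theta>) + \<Sum> \<theta>\<^sub>i\<^sub>j ln M\<^sub>i\<^sub>j \<le> ln \<lambda>\<close>, with equality for the
  Perron tilt \<open>Q\<^sub>i\<^sub>j = M\<^sub>i\<^sub>j v\<^sub>j / (\<lambda> v\<^sub>i)\<close> of \<open>M\<close>: the difference is a relative entropy, because the
  terms \<open>ln v\<^sub>i - ln v\<^sub>j\<close> telescope under a stationary measure. Applied to \<open>M(\<alpha>)\<close> this says that
  \<open>\<theta>(\<alpha>)\<close> maximises \<open>G\<^sub>\<alpha>(\<theta>) = H(\<theta>) + \<alpha> L(\<theta>) - \<alpha>(1-\<alpha>) R(\<theta>)\<close>, where \<open>L(\<theta>) = \<Sum> \<theta>\<^sub>i\<^sub>j ln P\<^sub>i\<^sub>j\<close>.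
  Adding \<open>b\<close> times \<open>G\<^sub>a(\<theta>(b)) \<le> G\<^sub>a(\<theta>(a))\<close> and \<open>a\<close> times \<open>G\<^sub>b(\<theta>(a)) \<le> G\<^sub>b(\<theta>(b))\<close> eliminates \<open>L\<close>
  and yields the monotonicity. At \<open>\<alpha> = 1\<close> the tilt of \<open>P\<close> is \<open>P\<close> itself, and at \<open>\<alpha> = 0\<close>
  the equality case reads \<open>H(0) = ln \<rho>\<^sub>0\<close>. Perron vectors and stationary distributions are
  obtained from Brouwer's fixed point theorem on the probability simplex.\<close>

definition prob_simplex :: "(real^'n::finite) set" where
  "prob_simplex = {x. (\<forall>i. 0 \<le> x$i) \<and> (\<Sum>i\<in>UNIV. x$i) = 1}"

lemma compact_prob_simplex: "compact (prob_simplex :: (real^'n::finite) set)"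
proof -
  have "closed (prob_simplex :: (real^'n) set)"
    unfolding prob_simplex_def
    by (intro closed_Collect_conj closed_Collect_all closed_Collect_le closed_Collect_eq
        continuous_intros)
  moreover have "prob_simplex \<subseteq> cbox (0::real^'n) 1"
  proof
    fix x :: "real^'n" assume x: "x \<in> prob_simplex"
    have "x$i \<le> (\<Sum>j\<in>UNIV. x$j)" for i
      by (rule member_le_sum) (use x in \<open>auto simp: prob_simplex_def\<close>)
    then show "x \<in> cbox 0 1" using x by (auto simp: mem_box_cart prob_simplex_def)
  qed
  ultimately show ?thesis
    using bounded_cbox bounded_subset compact_eq_bounded_closed by blast
qed

lemma convex_prob_simplex: "convex (prob_simplex :: (real^'n::finite) set)"
  unfolding convex_def prob_simplex_def
  by (auto simp: sum.distrib sum_distrib_left[symmetric])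

lemma prob_simplex_fixpoint:
  fixes g :: "real^'n::finite \<Rightarrow> real^'n"
  assumes "continuous_on prob_simplex g" "\<And>x. x \<in> prob_simplex \<Longrightarrow> g x \<in> prob_simplex"
  obtains x where "x \<in> prob_simplex" "g x = x"
proof -
  have "(\<chi> i. 1 / real CARD('n)) \<in> (prob_simplex :: (real^'n) set)"
    by (simp add: prob_simplex_def)
  then show ?thesis
    using brouwer[OF compact_prob_simplex convex_prob_simplex _ assms(1)] assms(2) that by blast
qed

lemma prob_simplex_nonzero:
  assumes "x \<in> prob_simplex"
  obtains k where "x$k > 0"
proof -
  have "\<not> (\<forall>k. x$k = 0)"
  proof
    assume "\<forall>k. x$k = 0"
    then have "(\<Sum>k\<in>UNIV. x$k) = 0" by simp
    then show False using assms by (simp add: prob_simplex_def)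
  qed
  then show ?thesis using assms that by (force simp: prob_simplex_def order_le_less)
qed

lemma irreducible_mat_successor_closed:
  assumes "irreducible_mat A" "S k" "\<And>y z. S y \<Longrightarrow> (y, z) \<in> edges_of A \<Longrightarrow> S z"
  shows "S i"
proof -
  have "(k, i) \<in> (edges_of A)\<^sup>+" using assms(1) by (simp add: irreducible_mat_def)
  then show ?thesis by (induction rule: trancl_induct) (use assms in blast)+
qed

lemma irreducible_mat_predecessor_closed:
  assumes "irreducible_mat A" "S k" "\<And>y z. (y, z) \<in> edges_of A \<Longrightarrow> S z \<Longrightarrow> S y"
  shows "S i"
proof -
  have "(i, k) \<in> (edges_of A)\<^sup>+" using assms(1) by (simp add: irreducible_mat_def)
  then show ?thesis by (induction rule: converse_trancl_induct) (use assms in blast)+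
qed

lemma irreducible_mat_has_predecessor:
  assumes "irreducible_mat A"
  obtains c where "A c k > 0"
proof -
  have "(k, k) \<in> (edges_of A)\<^sup>+" using assms by (simp add: irreducible_mat_def)
  then obtain c where "(c, k) \<in> edges_of A" by (meson tranclE)
  then show ?thesis using that by (simp add: edges_of_def)
qed

text \<open>An edge \<open>y \<rightarrow> z\<close> forces \<open>A\<^sub>y\<^sub>z x\<^sub>z \<le> (A x)\<^sub>y\<close>, so zeros of a nonnegative eigenvector spread
  along edges.\<close>

lemma nonneg_eigenvector_pos:
  fixes A :: "'n::finite \<Rightarrow> 'n \<Rightarrow> real"
  assumes irr: "irreducible_mat A" and nn: "\<forall>i j. A i j \<ge> 0"
    and xnn: "\<forall>i. x i \<ge> 0" and "x k \<noteq> 0"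
    and eig: "\<forall>i. (\<Sum>j\<in>UNIV. A i j * x j) = r * x i"
  shows "x i > 0"
proof -
  have "x z = 0" if "x y = 0" "(y, z) \<in> edges_of A" for y z
  proof -
    have "A y z * x z \<le> (\<Sum>j\<in>UNIV. A y j * x j)"
      by (rule member_le_sum) (use nn xnn in auto)
    then have "A y z * x z \<le> 0" using eig that(1) by simp
    moreover have "A y z > 0" using that(2) by (simp add: edges_of_def)
    ultimately show ?thesis using xnn by (smt (verit) mult_pos_pos)
  qed
  then have "x i \<noteq> 0"
    using irreducible_mat_predecessor_closed[OF irr, of "\<lambda>i. x i \<noteq> 0" k] \<open>x k \<noteq> 0\<close> by blast
  then show ?thesis using xnn by (simp add: order_less_le)
qed

lemma positive_eigenvector_exists:
  fixes A :: "'n::finite \<Rightarrow> 'n \<Rightarrow> real"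
  assumes nn: "\<forall>i j. A i j \<ge> 0" and irr: "irreducible_mat A"
  obtains v r where "r > 0" "\<forall>i. v i > 0" "\<forall>i. (\<Sum>j\<in>UNIV. A i j * v j) = r * v i"
proof -
  define AM :: "real^'n^'n" where "AM = (\<chi> i j. A i j)"
  have AMv: "(AM *v x) $ i = (\<Sum>j\<in>UNIV. A i j * x$j)" for x i
    by (simp add: AM_def matrix_vector_mult_def)
  define den where "den x = (\<Sum>i\<in>UNIV. (AM *v x) $ i)" for x
  have AMv_nonneg: "(AM *v x) $ i \<ge> 0" if "x \<in> prob_simplex" for x i
    unfolding AMv using nn that by (auto simp: prob_simplex_def intro!: sum_nonneg)
  have den_pos: "den x > 0" if x: "x \<in> prob_simplex" for x
  proof -
    obtain k where k: "x$k > 0" using prob_simplex_nonzero[OF x] .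
    obtain c where c: "A c k > 0" using irreducible_mat_has_predecessor[OF irr] .
    have "A c k * x$k \<le> (\<Sum>j\<in>UNIV. A c j * x$j)"
      by (rule member_le_sum) (use nn x in \<open>auto simp: prob_simplex_def\<close>)
    then have "(AM *v x) $ c > 0" unfolding AMv using c k by (smt (verit) mult_pos_pos)
    moreover have "(AM *v x) $ c \<le> den x"
      unfolding den_def by (rule member_le_sum) (use AMv_nonneg x in auto)
    ultimately show ?thesis by linarith
  qed
  define g where "g x = (1 / den x) *\<^sub>R (AM *v x)" for x
  have "continuous_on prob_simplex g"
    unfolding g_def den_def
    by (intro continuous_intros) (use den_pos in \<open>fastforce simp: den_def\<close>)
  moreover have "g x \<in> prob_simplex" if "x \<in> prob_simplex" for x
    using den_pos[OF that] AMv_nonneg[OF that]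
    by (auto simp: prob_simplex_def g_def den_def sum_divide_distrib[symmetric])
  ultimately obtain x where x: "x \<in> prob_simplex" "g x = x"
    using prob_simplex_fixpoint by blast
  have r: "den x > 0" using den_pos[OF x(1)] .
  have eig: "\<forall>i. (\<Sum>j\<in>UNIV. A i j * x$j) = den x * x$i"
  proof
    fix i
    have "(1 / den x) * (AM *v x) $ i = x $ i"
      using x(2) unfolding g_def by (metis vector_scaleR_component real_scaleR_def)
    then show "(\<Sum>j\<in>UNIV. A i j * x$j) = den x * x$i" using r unfolding AMv by (simp add: field_simps)
  qed
  obtain k where "x$k > 0" using prob_simplex_nonzero[OF x(1)] .
  then have "\<forall>i. x$i > 0"
    using nonneg_eigenvector_pos[OF irr nn, of "\<lambda>i. x$i" k] x(1) eig
    by (auto simp: prob_simplex_def)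
  then show ?thesis using that r eig by blast
qed

lemma stationary_dist_exists:
  fixes Q :: "'n::finite \<Rightarrow> 'n \<Rightarrow> real"
  assumes "stochastic_mat Q"
  obtains p where "stationary_dist Q p"
proof -
  have nn: "\<forall>i j. Q i j \<ge> 0" and rs: "\<forall>i. (\<Sum>j\<in>UNIV. Q i j) = 1"
    using assms by (auto simp: stochastic_mat_def)
  define QT :: "real^'n^'n" where "QT = (\<chi> j i. Q i j)"
  have QTv: "(QT *v x) $ j = (\<Sum>i\<in>UNIV. Q i j * x$i)" for x j
    by (simp add: QT_def matrix_vector_mult_def)
  have "QT *v x \<in> prob_simplex" if x: "x \<in> prob_simplex" for x
  proof -
    have "(\<Sum>j\<in>UNIV. (QT *v x) $ j) = (\<Sum>i\<in>UNIV. x$i * (\<Sum>j\<in>UNIV. Q i j))"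
      unfolding QTv by (subst sum.swap) (simp add: sum_distrib_left mult.commute)
    also have "\<dots> = 1" using rs x by (simp add: prob_simplex_def)
    finally show ?thesis
      using nn x unfolding prob_simplex_def by (auto simp: QTv intro!: sum_nonneg)
  qed
  then obtain x where x: "x \<in> prob_simplex" "QT *v x = x"
    using prob_simplex_fixpoint[of "(*v) QT"] by (auto intro: continuous_intros)
  have "stationary_dist Q (\<lambda>i. x$i)"
    unfolding stationary_dist_def
  proof (intro conjI allI)
    show "0 \<le> x$i" "(\<Sum>i\<in>UNIV. x$i) = 1" for i using x(1) by (auto simp: prob_simplex_def)
    show "(\<Sum>i\<in>UNIV. x$i * Q i j) = x$j" for j
      using arg_cong[OF x(2), of "\<lambda>y. y$j"] unfolding QTv by (simp add: mult.commute)
  qed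
  then show ?thesis using that by blast
qed

text \<open>Comparing an eigenvector \<open>x\<close> with the largest multiple \<open>c v\<close> it touches bounds \<open>|\<mu>|\<close> by \<open>r\<close>.\<close>

lemma spec_rad_eqI:
  fixes A :: "'n::finite \<Rightarrow> 'n \<Rightarrow> real"
  assumes nn: "\<forall>i j. A i j \<ge> 0" and vpos: "\<forall>i. v i > 0" and "r \<ge> 0"
    and eig: "\<forall>i. (\<Sum>j\<in>UNIV. A i j * v j) = r * v i"
  shows "spec_rad A = r"
  unfolding spec_rad_def
proof (rule cSup_eq_maximum)
  have "(\<lambda>j. complex_of_real (v j)) \<noteq> (\<lambda>_. 0)" using vpos by (metis less_irrefl of_real_eq_0_iff)
  moreover have "(\<Sum>j\<in>UNIV. complex_of_real (A i j) * complex_of_real (v j))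
      = complex_of_real r * complex_of_real (v i)" for i
    using arg_cong[OF eig[rule_format, of i], of complex_of_real] by (simp add: of_real_sum)
  ultimately show "r \<in> {cmod \<mu> |\<mu>. \<exists>x. x \<noteq> (\<lambda>_. 0) \<and>
       (\<forall>i. (\<Sum>j\<in>UNIV. complex_of_real (A i j) * x j) = \<mu> * x i)}"
    using \<open>r \<ge> 0\<close> by (intro CollectI exI[of _ "complex_of_real r"]) auto
next
  fix y assume "y \<in> {cmod \<mu> |\<mu>. \<exists>x. x \<noteq> (\<lambda>_. 0) \<and>
       (\<forall>i. (\<Sum>j\<in>UNIV. complex_of_real (A i j) * x j) = \<mu> * x i)}"
  then obtain \<mu> x where y: "y = cmod \<mu>" and "x \<noteq> (\<lambda>_. 0)"
    and ex: "\<forall>i. (\<Sum>j\<in>UNIV. complex_of_real (A i j) * x j) = \<mu> * x i" by blast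
  then obtain k where k: "x k \<noteq> 0" by auto
  define c where "c = Max (range (\<lambda>i. cmod (x i) / v i))"
  have cge: "cmod (x i) / v i \<le> c" for i unfolding c_def by (rule Max_ge) auto
  have "c \<in> range (\<lambda>i. cmod (x i) / v i)" unfolding c_def by (rule Max_in) auto
  then obtain i0 where "c = cmod (x i0) / v i0" by blast
  then have i0: "c * v i0 = cmod (x i0)" using vpos by (simp add: less_imp_neq[symmetric])
  have "0 < cmod (x k) / v k" using k vpos by auto
  then have "c * v i0 > 0" using cge[of k] vpos by (smt (verit) mult_pos_pos)
  have xle: "cmod (x j) \<le> c * v j" for j using cge[of j] vpos by (simp add: field_simps)
  have "cmod \<mu> * (c * v i0) = cmod (\<Sum>j\<in>UNIV. complex_of_real (A i0 j) * x j)"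
    using ex i0 by (simp add: norm_mult)
  also have "\<dots> \<le> (\<Sum>j\<in>UNIV. cmod (complex_of_real (A i0 j) * x j))" by (rule norm_sum)
  also have "\<dots> = (\<Sum>j\<in>UNIV. A i0 j * cmod (x j))" using nn by (simp add: norm_mult)
  also have "\<dots> \<le> (\<Sum>j\<in>UNIV. A i0 j * (c * v j))"
    by (rule sum_mono) (use nn xle in \<open>simp add: mult_left_mono\<close>)
  also have "\<dots> = r * (c * v i0)"
    using eig by (simp add: sum_distrib_left[symmetric] mult.left_commute)
  finally have "cmod \<mu> \<le> r" using \<open>c * v i0 > 0\<close> by (simp add: mult_le_cancel_right_pos)
  then show "y \<le> r" using y by simp
qed

text \<open>With \<open>c = min p\<^sub>i/\<pi>\<^sub>i\<close>, \<open>p - c\<pi>\<close> is a nonnegative stationary vector vanishing somewhere,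
  hence everywhere.\<close>

lemma stationary_dist_unique:
  fixes P :: "'n::finite \<Rightarrow> 'n \<Rightarrow> real"
  assumes irr: "irreducible_mat P" and sto: "stochastic_mat P"
    and \<pi>: "stationary_dist P \<pi>" "\<forall>i. \<pi> i > 0" and p: "stationary_dist P p"
  shows "p = \<pi>"
proof -
  have nn: "\<forall>i j. P i j \<ge> 0" using sto by (simp add: stochastic_mat_def)
  define c where "c = Min (range (\<lambda>i. p i / \<pi> i))"
  have cle: "c \<le> p i / \<pi> i" for i unfolding c_def by (rule Min_le) auto
  have "c \<in> range (\<lambda>i. p i / \<pi> i)" unfolding c_def by (rule Min_in) auto
  then obtain k where k: "c = p k / \<pi> k" by auto
  define x where "x i = p i - c * \<pi> i" for i
  have xnn: "x i \<ge> 0" for i using cle[of i] \<pi>(2) unfolding x_def by (simp add: field_simps)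
  have xk: "x k = 0" using k \<pi>(2)[rule_format, of k] unfolding x_def by (simp add: field_simps)
  have xst: "(\<Sum>i\<in>UNIV. x i * P i j) = x j" for j
  proof -
    have "(\<Sum>i\<in>UNIV. x i * P i j) = (\<Sum>i\<in>UNIV. p i * P i j) - c * (\<Sum>i\<in>UNIV. \<pi> i * P i j)"
      by (simp add: x_def left_diff_distrib sum_subtractf sum_distrib_left mult.assoc)
    then show ?thesis using p \<pi>(1) unfolding x_def stationary_dist_def by simp
  qed
  have "x y = 0" if "(y, z) \<in> edges_of P" "x z = 0" for y z
  proof -
    have "x y * P y z \<le> (\<Sum>i\<in>UNIV. x i * P i z)"
      by (rule member_le_sum[where f="\<lambda>i. x i * P i z"]) (use nn xnn in auto)
    then have "x y * P y z \<le> 0" using xst[of z] that by simp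
    moreover have "P y z > 0" using that by (simp add: edges_of_def)
    ultimately show ?thesis using xnn[of y] by (smt (verit) mult_pos_pos)
  qed
  then have pc: "p i = c * \<pi> i" for i
    using irreducible_mat_predecessor_closed[OF irr, of "\<lambda>i. x i = 0" k] xk
    unfolding x_def by fastforce
  have "1 = c" using p \<pi>(1) by (simp add: pc sum_distrib_left[symmetric] stationary_dist_def)
  then show ?thesis using pc by auto
qed

lemma stochastic_harmonic_const:
  fixes P :: "'n::finite \<Rightarrow> 'n \<Rightarrow> real"
  assumes irr: "irreducible_mat P" and sto: "stochastic_mat P"
    and eig: "\<forall>i. (\<Sum>j\<in>UNIV. P i j * v j) = v i"
  shows "v i = v j"
proof -
  have nn: "\<forall>i j. P i j \<ge> 0" and rs: "\<forall>i. (\<Sum>j\<in>UNIV. P i j) = 1"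
    using sto by (auto simp: stochastic_mat_def)
  define m where "m = Max (range v)"
  have vle: "v i \<le> m" for i unfolding m_def by (rule Max_ge) auto
  have "m \<in> range v" unfolding m_def by (rule Max_in) auto
  then obtain k where k: "v k = m" by auto
  have "v z = m" if "v y = m" "(y, z) \<in> edges_of P" for y z
  proof (rule ccontr)
    assume "v z \<noteq> m"
    then have "v z < m" using vle[of z] by linarith
    moreover have "P y z > 0" using that by (simp add: edges_of_def)
    ultimately have "(\<Sum>j\<in>UNIV. P y j * v j) < (\<Sum>j\<in>UNIV. P y j * m)"
      by (intro sum_strict_mono_ex1) (use nn vle in \<open>auto intro: mult_left_mono intro!: exI[of _ z]\<close>)
    also have "\<dots> = m" using rs by (simp add: sum_distrib_right[symmetric])
    finally show False using eig that by simp
  qed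
  then have "v i = m" for i using irreducible_mat_successor_closed[OF irr, of "\<lambda>i. v i = m"] k by blast
  then show ?thesis by simp
qed

definition perron_tilt :: "('n \<Rightarrow> 'n \<Rightarrow> real) \<Rightarrow> ('n \<Rightarrow> real) \<Rightarrow> real \<Rightarrow> 'n \<Rightarrow> 'n \<Rightarrow> real" where
  "perron_tilt M v r i j = M i j * v j / (r * v i)"

lemma perron_tilt_pos_iff:
  assumes "\<forall>i. v i > 0" "r > 0"
  shows "perron_tilt M v r i j > 0 \<longleftrightarrow> M i j > 0"
proof -
  have "r * v i > 0" "v j > 0" using assms by auto
  then show ?thesis by (simp add: perron_tilt_def pos_less_divide_eq zero_less_mult_iff)
qed

lemma stochastic_perron_tilt:
  fixes M :: "'n::finite \<Rightarrow> 'n \<Rightarrow> real"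
  assumes "\<forall>i j. M i j \<ge> 0" "\<forall>i. v i > 0" "r > 0"
    and eig: "\<forall>i. (\<Sum>j\<in>UNIV. M i j * v j) = r * v i"
  shows "stochastic_mat (perron_tilt M v r)"
  unfolding stochastic_mat_def
proof (intro conjI allI)
  fix i j
  have "v i > 0" "v j > 0" using assms(2) by auto
  then have "r * v i > 0" "v j \<ge> 0" "r \<noteq> 0" "v i \<noteq> 0" using assms(3) by simp_all
  then show "perron_tilt M v r i j \<ge> 0" using assms(1) by (simp add: perron_tilt_def)
  show "(\<Sum>j\<in>UNIV. perron_tilt M v r i j) = 1"
    using \<open>r \<noteq> 0\<close> \<open>v i \<noteq> 0\<close> eig by (simp add: perron_tilt_def sum_divide_distrib[symmetric]
        sum_distrib_right[symmetric])
qed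

lemma ln_perron_tilt:
  assumes "\<forall>i. v i > 0" "r > 0" "M i j > 0"
  shows "ln (perron_tilt M v r i j) = ln (M i j) + ln (v j) - ln r - ln (v i)"
proof -
  have "v i > 0" "v j > 0" using assms(1) by auto
  then show ?thesis using assms(2,3) by (simp add: perron_tilt_def ln_div ln_mult)
qed

lemma entropy_row_weighted:
  fixes Q :: "'n::finite \<Rightarrow> 'n \<Rightarrow> real"
  assumes "stochastic_mat Q"
  shows "entropy (\<lambda>i j. p i * Q i j) = - (\<Sum>i\<in>UNIV. \<Sum>j\<in>UNIV. p i * Q i j * ln (Q i j))"
proof -
  have "(\<Sum>k\<in>UNIV. p i * Q i k) = p i" for i
    using assms by (simp add: stochastic_mat_def sum_distrib_left[symmetric])
  then show ?thesis unfolding entropy_def by (auto intro!: sum.cong)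
qed

lemma sum_row_weighted_stochastic:
  fixes Q :: "'n::finite \<Rightarrow> 'n \<Rightarrow> real"
  assumes "stochastic_mat Q"
  shows "(\<Sum>i\<in>UNIV. \<Sum>j\<in>UNIV. p i * Q i j * f i) = (\<Sum>i\<in>UNIV. p i * f i)"
  using assms by (simp add: stochastic_mat_def sum_distrib_left[symmetric] sum_distrib_right[symmetric]
      mult.commute mult.left_commute)

lemma stationary_flow_telescope:
  fixes Q :: "'n::finite \<Rightarrow> 'n \<Rightarrow> real"
  assumes "stochastic_mat Q" "stationary_dist Q p"
  shows "(\<Sum>i\<in>UNIV. \<Sum>j\<in>UNIV. p i * Q i j * (f i - f j)) = 0"
proof -
  have "(\<Sum>i\<in>UNIV. \<Sum>j\<in>UNIV. p i * Q i j * f j) = (\<Sum>j\<in>UNIV. (\<Sum>i\<in>UNIV. p i * Q i j) * f j)"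
    by (subst sum.swap) (simp add: sum_distrib_right)
  also have "\<dots> = (\<Sum>j\<in>UNIV. p j * f j)" using assms(2) by (simp add: stationary_dist_def)
  finally show ?thesis
    using sum_row_weighted_stochastic[OF assms(1)] by (simp add: right_diff_distrib sum_subtractf)
qed

lemma gibbs_inequality:
  fixes Q Q' :: "'n::finite \<Rightarrow> 'n \<Rightarrow> real"
  assumes Q: "stochastic_mat Q" and Q': "stochastic_mat Q'" and pnn: "\<forall>i. p i \<ge> 0"
    and supp: "\<And>i j. Q i j > 0 \<Longrightarrow> Q' i j > 0"
  shows "(\<Sum>i\<in>UNIV. \<Sum>j\<in>UNIV. p i * Q i j * (ln (Q' i j) - ln (Q i j))) \<le> 0"
proof -
  have "p i * Q i j * (ln (Q' i j) - ln (Q i j)) \<le> p i * (Q' i j - Q i j)" for i j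
  proof (cases "Q i j > 0")
    case True
    then have "Q' i j > 0" using supp by blast
    then have "ln (Q' i j / Q i j) \<le> Q' i j / Q i j - 1" using True by (intro ln_le_minus_one) simp
    then have "Q i j * (ln (Q' i j) - ln (Q i j)) \<le> Q' i j - Q i j"
      using True \<open>Q' i j > 0\<close> by (simp add: ln_div field_simps)
    then show ?thesis using pnn by (simp add: mult.assoc mult_left_mono)
  next
    case False
    then have "Q i j = 0" using Q by (simp add: stochastic_mat_def order_less_le)
    then show ?thesis using pnn Q' by (simp add: stochastic_mat_def)
  qed
  then have "(\<Sum>i\<in>UNIV. \<Sum>j\<in>UNIV. p i * Q i j * (ln (Q' i j) - ln (Q i j)))
      \<le> (\<Sum>i\<in>UNIV. \<Sum>j\<in>UNIV. p i * (Q' i j - Q i j))"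
    by (intro sum_mono)
  also have "\<dots> = (\<Sum>i\<in>UNIV. p i * ((\<Sum>j\<in>UNIV. Q' i j) - (\<Sum>j\<in>UNIV. Q i j)))"
    by (simp add: sum_distrib_left[symmetric] sum_subtractf[symmetric])
  also have "\<dots> = 0" using Q Q' by (simp add: stochastic_mat_def)
  finally show ?thesis .
qed

lemma perron_tilt_variational_identity:
  fixes M Q :: "'n::finite \<Rightarrow> 'n \<Rightarrow> real"
  assumes v: "\<forall>i. v i > 0" and r: "r > 0"
    and Q: "stochastic_mat Q" "stationary_dist Q p"
    and supp: "\<And>i j. Q i j > 0 \<Longrightarrow> M i j > 0"
  shows "(\<Sum>i\<in>UNIV. \<Sum>j\<in>UNIV. p i * Q i j * (ln (M i j) - ln (Q i j)))
    = ln r + (\<Sum>i\<in>UNIV. \<Sum>j\<in>UNIV. p i * Q i j * (ln (perron_tilt M v r i j) - ln (Q i j)))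
           + (\<Sum>i\<in>UNIV. \<Sum>j\<in>UNIV. p i * Q i j * (ln (v i) - ln (v j)))"
proof -
  have summand: "p i * Q i j * (ln (M i j) - ln (Q i j))
      = p i * Q i j * (ln (perron_tilt M v r i j) - ln (Q i j)) + p i * Q i j * ln r
        + p i * Q i j * (ln (v i) - ln (v j))" for i j
  proof (cases "Q i j > 0")
    case True
    then show ?thesis
      unfolding ln_perron_tilt[where M=M and v=v and r=r and i=i and j=j, OF v r supp[OF True]]
      by (simp add: algebra_simps)
  next
    case False
    then have "Q i j = 0" using Q(1) by (simp add: stochastic_mat_def order_less_le)
    then show ?thesis by simp
  qed
  have "(\<Sum>i\<in>UNIV. \<Sum>j\<in>UNIV. p i * Q i j * ln r) = ln r"
    using sum_row_weighted_stochastic[OF Q(1), of p "\<lambda>_. ln r"] Q(2)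
    by (simp add: stationary_dist_def sum_distrib_right[symmetric])
  then show ?thesis by (simp add: summand sum.distrib)
qed

lemma perron_tilt_variational:
  fixes M Q :: "'n::finite \<Rightarrow> 'n \<Rightarrow> real"
  assumes "\<forall>i j. M i j \<ge> 0" "\<forall>i. v i > 0" "r > 0"
    and eig: "\<forall>i. (\<Sum>j\<in>UNIV. M i j * v j) = r * v i"
    and Q: "stochastic_mat Q" "stationary_dist Q p"
    and supp: "\<And>i j. Q i j > 0 \<Longrightarrow> M i j > 0"
  shows "(\<Sum>i\<in>UNIV. \<Sum>j\<in>UNIV. p i * Q i j * (ln (M i j) - ln (Q i j))) \<le> ln r"
proof -
  have "(\<Sum>i\<in>UNIV. \<Sum>j\<in>UNIV. p i * Q i j * (ln (perron_tilt M v r i j) - ln (Q i j))) \<le> 0"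
    using Q assms(1-3) supp
    by (intro gibbs_inequality stochastic_perron_tilt[OF _ _ _ eig])
      (auto simp: stationary_dist_def perron_tilt_pos_iff)
  then show ?thesis
    using perron_tilt_variational_identity[OF assms(2,3) Q supp] stationary_flow_telescope[OF Q]
    by simp
qed

lemma perron_tilt_variational_eq:
  fixes M :: "'n::finite \<Rightarrow> 'n \<Rightarrow> real"
  assumes "\<forall>i j. M i j \<ge> 0" "\<forall>i. v i > 0" "r > 0"
    and eig: "\<forall>i. (\<Sum>j\<in>UNIV. M i j * v j) = r * v i"
    and p: "stationary_dist (perron_tilt M v r) p"
  shows "(\<Sum>i\<in>UNIV. \<Sum>j\<in>UNIV. p i * perron_tilt M v r i j *
      (ln (M i j) - ln (perron_tilt M v r i j))) = ln r"
  using perron_tilt_variational_identity[OF assms(2,3) stochastic_perron_tilt[OF assms(1-3) eig] p]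
    stationary_flow_telescope[OF stochastic_perron_tilt[OF assms(1-3) eig] p]
    perron_tilt_pos_iff[OF assms(2,3)]
  by simp

lemma penalized_maximizers_antimono:
  fixes a b ha hb la lb ra rb :: real
  assumes "0 \<le> a" "a < b" "0 \<le> ra" "0 \<le> rb"
    and at_a: "hb + a * lb - a * (1 - a) * rb \<le> ha + a * la - a * (1 - a) * ra"
    and at_b: "ha + b * la - b * (1 - b) * ra \<le> hb + b * lb - b * (1 - b) * rb"
  shows "hb - b\<^sup>2 * rb \<le> ha - a\<^sup>2 * ra"
proof -
  have "b * (hb + a * lb - a * (1 - a) * rb) + a * (ha + b * la - b * (1 - b) * ra)
      \<le> b * (ha + a * la - a * (1 - a) * ra) + a * (hb + b * lb - b * (1 - b) * rb)"
    using assms(1,2) by (intro add_mono mult_left_mono[OF at_a] mult_left_mono[OF at_b]) simp_all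
  then have "(b - a) * (hb - a * b * rb) \<le> (b - a) * (ha - a * b * ra)"
    by (simp add: algebra_simps)
  then have "hb - a * b * rb \<le> ha - a * b * ra" using \<open>a < b\<close> by simp
  moreover have "b * (b - a) * rb \<ge> 0" "a * (b - a) * ra \<ge> 0" using assms(1-4) by simp_all
  ultimately show ?thesis by (simp add: power2_eq_square algebra_simps)
qed

lemma Mmat_pos_iff: "Mmat P \<beta> a i j > 0 \<longleftrightarrow> P i j > 0"
  by (simp add: Mmat_def)

lemma Mmat_nonneg: "Mmat P \<beta> a i j \<ge> 0"
  by (simp add: Mmat_def)

lemma irreducible_Mmat: "irreducible_mat P \<Longrightarrow> irreducible_mat (Mmat P \<beta> a)"
  by (simp add: irreducible_mat_def edges_of_def Mmat_pos_iff)

lemma ln_Mmat: "P i j > 0 \<Longrightarrow> ln (Mmat P \<beta> a i j) = a * ln (P i j) - a * (1 - a) * (\<beta> i)\<^sup>2 / 2"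
  by (simp add: Mmat_def ln_mult ln_powr)

lemma Mmat_zero: "Mmat P \<beta> 0 = zero_one_mat P"
  by (simp add: fun_eq_iff Mmat_def zero_one_mat_def)

lemma Mmat_one: "stochastic_mat P \<Longrightarrow> Mmat P \<beta> 1 = P"
  by (auto simp: fun_eq_iff Mmat_def stochastic_mat_def order_less_le)

lemma perron_eigenpair:
  assumes "irreducible_mat P"
  shows "\<forall>i. perron_vec P \<beta> a i > 0" and "perron_root P \<beta> a > 0"
    and "\<forall>i. (\<Sum>j\<in>UNIV. Mmat P \<beta> a i j * perron_vec P \<beta> a j) = perron_root P \<beta> a * perron_vec P \<beta> a i"
proof -
  have Mnn: "\<forall>i j. Mmat P \<beta> a i j \<ge> 0" by (simp add: Mmat_nonneg)
  obtain v r where vr: "r > 0" "\<forall>i. v i > 0" "\<forall>i. (\<Sum>j\<in>UNIV. Mmat P \<beta> a i j * v j) = r * v i"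
    using positive_eigenvector_exists[OF Mnn irreducible_Mmat[OF assms]] .
  have "perron_root P \<beta> a = r"
    unfolding perron_root_def using vr by (intro spec_rad_eqI[OF Mnn vr(2)]) simp_all
  then have "\<exists>v. (\<forall>i. v i > 0) \<and>
      (\<forall>i. (\<Sum>j\<in>UNIV. Mmat P \<beta> a i j * v j) = perron_root P \<beta> a * v i)"
    using vr by auto
  then have "(\<forall>i. perron_vec P \<beta> a i > 0) \<and>
      (\<forall>i. (\<Sum>j\<in>UNIV. Mmat P \<beta> a i j * perron_vec P \<beta> a j) = perron_root P \<beta> a * perron_vec P \<beta> a i)"
    unfolding perron_vec_def by (rule someI_ex)
  then show "\<forall>i. perron_vec P \<beta> a i > 0"
    "\<forall>i. (\<Sum>j\<in>UNIV. Mmat P \<beta> a i j * perron_vec P \<beta> a j) = perron_root P \<beta> a * perron_vec P \<beta> a i"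
    by blast+
  show "perron_root P \<beta> a > 0" using \<open>perron_root P \<beta> a = r\<close> vr(1) by simp
qed

lemma Qmat_eq_perron_tilt:
  "Qmat P \<beta> a = perron_tilt (Mmat P \<beta> a) (perron_vec P \<beta> a) (perron_root P \<beta> a)"
  by (simp add: fun_eq_iff Qmat_def perron_tilt_def)

lemma stochastic_Qmat: "irreducible_mat P \<Longrightarrow> stochastic_mat (Qmat P \<beta> a)"
  unfolding Qmat_eq_perron_tilt
  by (intro stochastic_perron_tilt perron_eigenpair) (simp_all add: Mmat_nonneg)

lemma Qmat_pos_iff: "irreducible_mat P \<Longrightarrow> Qmat P \<beta> a i j > 0 \<longleftrightarrow> P i j > 0"
  unfolding Qmat_eq_perron_tilt by (simp add: perron_tilt_pos_iff perron_eigenpair Mmat_pos_iff)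

lemma stationary_thetabar:
  assumes "irreducible_mat P"
  shows "stationary_dist (Qmat P \<beta> a) (thetabar P \<beta> a)"
proof -
  obtain p where "stationary_dist (Qmat P \<beta> a) p"
    using stationary_dist_exists[OF stochastic_Qmat[OF assms]] .
  then show ?thesis unfolding thetabar_def by (rule someI[where P="stationary_dist (Qmat P \<beta> a)"])
qed

definition Lfun :: "('n::finite \<Rightarrow> 'n \<Rightarrow> real) \<Rightarrow> ('n \<Rightarrow> real) \<Rightarrow> real \<Rightarrow> real" where
  "Lfun P \<beta> a = (\<Sum>i\<in>UNIV. \<Sum>j\<in>UNIV. theta P \<beta> a i j * ln (P i j))"

lemma Rfun_nonneg:
  assumes "irreducible_mat P"
  shows "Rfun P \<beta> a \<ge> 0"
proof -
  have "thetabar P \<beta> a i \<ge> 0" for i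
    using stationary_thetabar[OF assms, of \<beta> a] by (simp add: stationary_dist_def)
  then show ?thesis unfolding Rfun_def by (intro sum_nonneg) simp
qed

lemma Hfun_eq:
  assumes "irreducible_mat P"
  shows "Hfun P \<beta> a = - (\<Sum>i\<in>UNIV. \<Sum>j\<in>UNIV. theta P \<beta> a i j * ln (Qmat P \<beta> a i j))"
proof -
  have "theta P \<beta> a = (\<lambda>i j. thetabar P \<beta> a i * Qmat P \<beta> a i j)"
    by (simp add: fun_eq_iff theta_def)
  then show ?thesis
    unfolding Hfun_def by (simp only: entropy_row_weighted[OF stochastic_Qmat[OF assms]])
qed

text \<open>Where \<open>P\<^sub>i\<^sub>j = 0\<close> also \<open>\<theta>\<^sub>i\<^sub>j = 0\<close>, so the junk value \<open>ln 0 = 0\<close> is harmless.\<close>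

lemma sum_theta_ln_Mmat_Qmat:
  assumes "irreducible_mat P"
  shows "(\<Sum>i\<in>UNIV. \<Sum>j\<in>UNIV. theta P \<beta> b i j * (ln (Mmat P \<beta> a i j) - ln (Qmat P \<beta> b i j)))
    = Hfun P \<beta> b + a * Lfun P \<beta> b - a * (1 - a) * Rfun P \<beta> b"
proof -
  have summand: "theta P \<beta> b i j * ln (Mmat P \<beta> a i j)
      = a * (theta P \<beta> b i j * ln (P i j))
        - a * (1 - a) * (thetabar P \<beta> b i * Qmat P \<beta> b i j * ((\<beta> i)\<^sup>2 / 2))" for i j
  proof (cases "P i j > 0")
    case True
    then show ?thesis unfolding ln_Mmat[where P=P and i=i and j=j, OF True] by (simp add: theta_def algebra_simps)
  next
    case False
    have "Qmat P \<beta> b i j \<ge> 0" using stochastic_Qmat[OF assms] by (simp add: stochastic_mat_def)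
    moreover have "\<not> Qmat P \<beta> b i j > 0" using Qmat_pos_iff[OF assms] False by simp
    ultimately show ?thesis by (simp add: theta_def)
  qed
  have "(\<Sum>i\<in>UNIV. \<Sum>j\<in>UNIV. thetabar P \<beta> b i * Qmat P \<beta> b i j * ((\<beta> i)\<^sup>2 / 2)) = Rfun P \<beta> b"
    unfolding sum_row_weighted_stochastic[OF stochastic_Qmat[OF assms]] Rfun_def by simp
  then have "(\<Sum>i\<in>UNIV. \<Sum>j\<in>UNIV. theta P \<beta> b i j * ln (Mmat P \<beta> a i j))
      = a * Lfun P \<beta> b - a * (1 - a) * Rfun P \<beta> b"
    unfolding summand Lfun_def by (simp only: sum_subtractf sum_distrib_left[symmetric])
  then show ?thesis
    unfolding Hfun_eq[OF assms] by (simp add: right_diff_distrib sum_subtractf)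
qed

lemma tilted_entropy_le_ln_perron_root:
  assumes "irreducible_mat P"
  shows "Hfun P \<beta> b + a * Lfun P \<beta> b - a * (1 - a) * Rfun P \<beta> b \<le> ln (perron_root P \<beta> a)"
proof -
  have "(\<Sum>i\<in>UNIV. \<Sum>j\<in>UNIV. thetabar P \<beta> b i * Qmat P \<beta> b i j *
      (ln (Mmat P \<beta> a i j) - ln (Qmat P \<beta> b i j))) \<le> ln (perron_root P \<beta> a)"
    by (rule perron_tilt_variational[OF _ perron_eigenpair[OF assms, where \<beta>=\<beta> and a=a]
          stochastic_Qmat[OF assms] stationary_thetabar[OF assms]])
      (simp_all add: Mmat_nonneg Mmat_pos_iff Qmat_pos_iff[OF assms])
  then show ?thesis
    using sum_theta_ln_Mmat_Qmat[OF assms, where \<beta>=\<beta> and a=a and b=b] by (simp add: theta_def)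
qed

lemma tilted_entropy_eq_ln_perron_root:
  assumes "irreducible_mat P"
  shows "Hfun P \<beta> a + a * Lfun P \<beta> a - a * (1 - a) * Rfun P \<beta> a = ln (perron_root P \<beta> a)"
proof -
  have "(\<Sum>i\<in>UNIV. \<Sum>j\<in>UNIV. thetabar P \<beta> a i * Qmat P \<beta> a i j *
      (ln (Mmat P \<beta> a i j) - ln (Qmat P \<beta> a i j))) = ln (perron_root P \<beta> a)"
    using perron_tilt_variational_eq[OF _ perron_eigenpair[OF assms, where \<beta>=\<beta> and a=a]]
      stationary_thetabar[OF assms, where \<beta>=\<beta> and a=a]
    by (simp add: Mmat_nonneg Qmat_eq_perron_tilt)
  then show ?thesis
    using sum_theta_ln_Mmat_Qmat[OF assms, where \<beta>=\<beta> and a=a and b=a] by (simp add: theta_def)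
qed

lemma Hfun_sub_Rfun_antimono:
  assumes "irreducible_mat P" "0 \<le> a" "a \<le> b"
  shows "Hfun P \<beta> b - b\<^sup>2 * Rfun P \<beta> b \<le> Hfun P \<beta> a - a\<^sup>2 * Rfun P \<beta> a"
proof (cases "a = b")
  case False
  show ?thesis
  proof (rule penalized_maximizers_antimono)
    show "0 \<le> a" "a < b" using assms(2,3) False by simp_all
    show "0 \<le> Rfun P \<beta> a" "0 \<le> Rfun P \<beta> b" using Rfun_nonneg[OF assms(1)] by simp_all
    show "Hfun P \<beta> b + a * Lfun P \<beta> b - a * (1 - a) * Rfun P \<beta> b
        \<le> Hfun P \<beta> a + a * Lfun P \<beta> a - a * (1 - a) * Rfun P \<beta> a"
      "Hfun P \<beta> a + b * Lfun P \<beta> a - b * (1 - b) * Rfun P \<beta> a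
        \<le> Hfun P \<beta> b + b * Lfun P \<beta> b - b * (1 - b) * Rfun P \<beta> b"
      unfolding tilted_entropy_eq_ln_perron_root[OF assms(1)]
      by (rule tilted_entropy_le_ln_perron_root[OF assms(1)])+
  qed
qed simp

lemma Hfun_zero: "irreducible_mat P \<Longrightarrow> Hfun P \<beta> 0 = ln (spec_rad (zero_one_mat P))"
  using tilted_entropy_eq_ln_perron_root[of P \<beta> 0] by (simp add: perron_root_def Mmat_zero)

text \<open>At \<open>\<alpha> = 1\<close> the Perron vector is harmonic for \<open>P\<close>, hence constant, so the tilt is \<open>P\<close>.\<close>

lemma Qmat_one:
  assumes "irreducible_mat P" "stochastic_mat P"
  shows "Qmat P \<beta> 1 = P"
proof -
  have "perron_root P \<beta> 1 = 1"
    unfolding perron_root_def Mmat_one[OF assms(2)] using assms(2)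
    by (intro spec_rad_eqI[where v="\<lambda>_. 1"]) (auto simp: stochastic_mat_def)
  then have "\<forall>i. (\<Sum>j\<in>UNIV. P i j * perron_vec P \<beta> 1 j) = perron_vec P \<beta> 1 i"
    using perron_eigenpair(3)[OF assms(1), of \<beta> 1] by (simp add: Mmat_one[OF assms(2)])
  then have const: "perron_vec P \<beta> 1 j = perron_vec P \<beta> 1 i" for i j
    by (rule stochastic_harmonic_const[OF assms])
  have nonzero: "perron_vec P \<beta> 1 i \<noteq> 0" for i
    using perron_eigenpair(1)[OF assms(1), of \<beta> 1] by (metis less_irrefl)
  have "Qmat P \<beta> 1 i j = P i j" for i j
    using \<open>perron_root P \<beta> 1 = 1\<close> const[of j i] nonzero[of i]
    by (simp add: Qmat_def Mmat_one[OF assms(2)])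
  then show ?thesis by (simp add: fun_eq_iff)
qed

lemma thetabar_one:
  assumes "irreducible_mat P" "stochastic_mat P" "stationary_dist P \<pi>" "\<forall>i. \<pi> i > 0"
  shows "thetabar P \<beta> 1 = \<pi>"
  using stationary_dist_unique[OF assms] stationary_thetabar[OF assms(1), of \<beta> 1]
  by (simp add: Qmat_one[OF assms(1,2)])

theorem lemma11:
  fixes P :: "'n::finite \<Rightarrow> 'n \<Rightarrow> real" and \<pi> :: "'n \<Rightarrow> real" and \<beta> :: "'n \<Rightarrow> real"
  assumes "stochastic_mat P" and "irreducible_mat P" and "aperiodic_mat P"
    and "stationary_dist P \<pi>" and "\<forall>i. \<pi> i > 0"
  shows "(Hfun P \<beta> 1 = - (\<Sum>i\<in>UNIV. \<Sum>j\<in>UNIV.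
             (if P i j = 0 then 0 else \<pi> i * P i j * ln (P i j)))) \<and>
         (Rfun P \<beta> 1 = (\<Sum>i\<in>UNIV. \<pi> i * (\<beta> i)\<^sup>2 / 2)) \<and>
         (Hfun P \<beta> 0 = ln (spec_rad (zero_one_mat P))) \<and>
         (\<forall>a\<in>{0..1}. \<forall>b\<in>{0..1}. a \<le> b \<longrightarrow>
           Hfun P \<beta> b - b\<^sup>2 * Rfun P \<beta> b \<le> Hfun P \<beta> a - a\<^sup>2 * Rfun P \<beta> a)"
proof (intro conjI ballI impI)
  have theta_one: "theta P \<beta> 1 i j = \<pi> i * P i j" for i j
    using thetabar_one[OF assms(2,1,4,5)] Qmat_one[OF assms(2,1)] by (simp add: theta_def)
  have "(if P i j = 0 then 0 else \<pi> i * P i j * ln (P i j)) = theta P \<beta> 1 i j * ln (Qmat P \<beta> 1 i j)"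
    for i j
    by (simp add: theta_one Qmat_one[OF assms(2,1)])
  then show "Hfun P \<beta> 1 = - (\<Sum>i\<in>UNIV. \<Sum>j\<in>UNIV. (if P i j = 0 then 0 else \<pi> i * P i j * ln (P i j)))"
    by (simp add: Hfun_eq[OF assms(2)])
  show "Rfun P \<beta> 1 = (\<Sum>i\<in>UNIV. \<pi> i * (\<beta> i)\<^sup>2 / 2)"
    using thetabar_one[OF assms(2,1,4,5)] by (simp add: Rfun_def)
  show "Hfun P \<beta> 0 = ln (spec_rad (zero_one_mat P))"
    using Hfun_zero[OF assms(2)] .
  show "Hfun P \<beta> b - b\<^sup>2 * Rfun P \<beta> b \<le> Hfun P \<beta> a - a\<^sup>2 * Rfun P \<beta> a"
    if "a \<in> {0..1}" "b \<in> {0..1}" "a \<le> b" for a b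
    using Hfun_sub_Rfun_antimono[OF assms(2)] that by simp
qed

end
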